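(* Let $\mathcal A$ be a unital $A_\infty$-category with unit transformation $\mathbf i^{\mathcal A}$ and let $f:\mathcal A\to\mathcal B$ be an $A_\infty$-functor. The following are equivalent: (C6) for all $X,Y\in\mathrm{Ob}\,\mathcal A$ the chain map $f_1:(s\mathcal A(X,Y),b_1)\to(s\mathcal B(Xf,Yf),b_1)$ is homotopic to $0$; (C7) for every $X\in\mathrm{Ob}\,\mathcal A$ the chain map $f_1:(s\mathcal A(X,X),b_1)\to(s\mathcal B(Xf,Xf),b_1)$ is homotopic to $0$; (C8) for every $X\in\mathrm{Ob}\,\mathcal A$ the induced map $H^\bullet(f_1):H^\bullet(s\mathcal A(X,X),b_1)\to H^\bullet(s\mathcal B(Xf,Xf),b_1)$ is zero; (C9) for every $X\in\mathrm{Ob}\,\mathcal A$ there is ${}_Xw\in(s\mathcal B)^{-2}(Xf,Xf)$ with ${}_X\mathbf i^{\mathcal A}_0f_1={}_Xw\,b_1$.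
   Context: Conventions: $\Bbbk$ commutative ring, $\otimes=\otimes_\Bbbk$ with Koszul signs, maps written on the right. $s$ denotes suspension and $T^ns\mathcal A(X,Y)=\bigoplus s\mathcal A(X,X_1)\otimes\cdots\otimes s\mathcal A(X_{n-1},Y)$. An $A_\infty$-category has degree 1 maps $b_n:T^ns\mathcal A\to s\mathcal A$ with $\sum(1^{\otimes r}\otimes b_n\otimes1^{\otimes t})b_{r+1+t}=0$; an $A_\infty$-functor $f$ has an object map and degree 0 components $f_n$ ($n\ge1$) with $\sum(f_{i_1}\otimes\cdots\otimes f_{i_l})b_l=\sum(1^{\otimes r}\otimes b_n\otimes1^{\otimes t})f_{r+1+t}$. Natural $A_\infty$-transformations, equivalence $\equiv$ and $(r\otimes p)B_2$ are as usual: a natural transformation $r:f\to g$ is a family $r_n:T^ns\mathcal A(X_0,X_n)\to s\mathcal B(X_0f,X_ng)$ ($n\ge0$) of degree $-1$ with $\sum(f_{i_\bullet}\otimes\cdots\otimes r_k\otimes g_{j_\bullet}\otimes\cdots)b_{q+1+t}+\sum(1^{\otimes q}\otimes b_m\otimes1^{\otimes t})r_{q+1+t}=0$; $(r\otimes p)B_2$ has components $\sum(f_{a_\bullet}\otimes\cdots\otimes r_j\otimes g_{c_\bullet}\otimes\cdots\otimes p_t\otimes h_{e_\bullet}\otimes\cdots)b_{\alpha+\beta+\gamma+2}$; $r\equiv p$ if $r-p=[v,b]$ for a degree $-2$ family $v$. A unit transformation of $\mathcal A$ is a natural $\mathbf i^{\mathcal A}:\mathrm{id}_{\mathcal A}\to\mathrm{id}_{\mathcal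 A}$ with $(\mathbf i^{\mathcal A}\otimes\mathbf i^{\mathcal A})B_2\equiv\mathbf i^{\mathcal A}$ such that the chain maps $(1\otimes{}_Y\mathbf i^{\mathcal A}_0)b_2$ and $({}_X\mathbf i^{\mathcal A}_0\otimes1)b_2$ of $(s\mathcal A(X,Y),b_1)$ are homotopy invertible for all $X,Y$, where ${}_X\mathbf i^{\mathcal A}_0\in(s\mathcal A)^{-1}(X,X)$ is the image of $1$; $\mathcal A$ is unital if it has one. *)

theory Defs
  imports Main "HOL.Modules"
begin

text \<open>The graded hom-modules (sA)^n(X,Y) are given as k-submodules
 H X Y n of an ambient k-module (a type 'a with scalar action sc).  A degree e map
 T^m sA -> sB is encoded (via the universal property of the tensor product) as a
 family of k-multilinear maps phi Xs ds xs, where Xs = [X0,...,Xm] are the objects,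
 ds = [d1,...,dm] the degrees and xs = [x1,...,xm] with xi in H X(i-1) Xi di.
 Maps are written on the right, so the Koszul sign of (1^r (x) phi (x) 1^t) on
 x1 (x) ... (x) xm is (-1)^(deg phi * (d(r+n+1)+...+dm)).\<close>

definition ksign :: "int \<Rightarrow> 'a::ab_group_add \<Rightarrow> 'a" where
  "ksign k x = (if even k then x else - x)"

definition args_ok :: "('o \<Rightarrow> 'o \<Rightarrow> int \<Rightarrow> 'a set) \<Rightarrow> 'o list \<Rightarrow> int list \<Rightarrow> 'a list \<Rightarrow> bool" where
  "args_ok H Xs ds xs \<longleftrightarrow> length Xs = Suc (length ds) \<and> length xs = length ds \<and>
     (\<forall>i<length ds. xs ! i \<in> H (Xs ! i) (Xs ! Suc i) (ds ! i))"

definition mlmap :: "('k::comm_ring_1 \<Rightarrow> 'a::ab_group_add \<Rightarrow> 'a) \<Rightarrow> ('k \<Rightarrow> 'b::ab_group_add \<Rightarrow> 'b)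
   \<Rightarrow> ('o \<Rightarrow> 'o \<Rightarrow> int \<Rightarrow> 'a set) \<Rightarrow> ('p \<Rightarrow> 'p \<Rightarrow> int \<Rightarrow> 'b set) \<Rightarrow> ('o \<Rightarrow> 'p)
   \<Rightarrow> nat \<Rightarrow> int \<Rightarrow> ('o list \<Rightarrow> int list \<Rightarrow> 'a list \<Rightarrow> 'b) \<Rightarrow> bool" where
  "mlmap sc sc' H H' ob m e phi \<longleftrightarrow>
     (\<forall>Xs ds xs. args_ok H Xs ds xs \<and> length ds = m \<longrightarrow>
        phi Xs ds xs \<in> H' (ob (hd Xs)) (ob (last Xs)) (sum_list ds + e)) \<and>
     (\<forall>Xs ds xs i x y c. args_ok H Xs ds xs \<and> length ds = m \<and> i < m \<and>
        x \<in> H (Xs ! i) (Xs ! Suc i) (ds ! i) \<and> y \<in> H (Xs ! i) (Xs ! Suc i) (ds ! i) \<longrightarrow>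
        phi Xs ds (xs[i := x + y]) = phi Xs ds (xs[i := x]) + phi Xs ds (xs[i := y]) \<and>
        phi Xs ds (xs[i := sc c x]) = sc' c (phi Xs ds (xs[i := x])))"

text \<open>The term (1^r (x) phi (x) 1^t) psi applied to x1 (x) ... (x) xm, where phi
 (of degree e) acts on the block x(r+1),...,x(r+n) (n may be 0).\<close>
definition ins_at :: "('o list \<Rightarrow> int list \<Rightarrow> 'a list \<Rightarrow> 'c::ab_group_add)
   \<Rightarrow> ('o list \<Rightarrow> int list \<Rightarrow> 'a list \<Rightarrow> 'a) \<Rightarrow> int \<Rightarrow> nat \<Rightarrow> nat
   \<Rightarrow> 'o list \<Rightarrow> int list \<Rightarrow> 'a list \<Rightarrow> 'c" where
  "ins_at psi phi e r n Xs ds xs =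
     ksign (e * sum_list (drop (r + n) ds))
       (psi (take (Suc r) Xs @ drop (r + n) Xs)
            (take r ds @ [sum_list (take n (drop r ds)) + e] @ drop (r + n) ds)
            (take r xs @ [phi (take (Suc n) (drop r Xs)) (take n (drop r ds)) (take n (drop r xs))]
               @ drop (r + n) xs))"

text \<open>The term (1^a (x) r_j (x) 1^c (x) p_t (x) 1^e) b, both r, p of degree -1.\<close>
definition ins2_at :: "('o list \<Rightarrow> int list \<Rightarrow> 'a list \<Rightarrow> 'a::ab_group_add)
   \<Rightarrow> ('o list \<Rightarrow> int list \<Rightarrow> 'a list \<Rightarrow> 'a) \<Rightarrow> ('o list \<Rightarrow> int list \<Rightarrow> 'a list \<Rightarrow> 'a)
   \<Rightarrow> nat \<Rightarrow> nat \<Rightarrow> nat \<Rightarrow> nat \<Rightarrow> 'o list \<Rightarrow> int list \<Rightarrow> 'a list \<Rightarrow> 'a" where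
  "ins2_at b r p a j c t Xs ds xs =
     (let i2 = a + j + c in
      ksign (- sum_list (drop (a + j) ds) - sum_list (drop (i2 + t) ds))
       (b (take (Suc a) Xs @ take (Suc c) (drop (a + j) Xs) @ drop (i2 + t) Xs)
          (take a ds @ [sum_list (take j (drop a ds)) - 1] @ take c (drop (a + j) ds)
             @ [sum_list (take t (drop i2 ds)) - 1] @ drop (i2 + t) ds)
          (take a xs @ [r (take (Suc j) (drop a Xs)) (take j (drop a ds)) (take j (drop a xs))]
             @ take c (drop (a + j) xs)
             @ [p (take (Suc t) (drop i2 Xs)) (take t (drop i2 ds)) (take t (drop i2 xs))]
             @ drop (i2 + t) xs)))"

text \<open>Components m of (r (x) p)B_2 for r, p : id -> id.\<close>
definition B2 :: "('o list \<Rightarrow> int list \<Rightarrow> 'a list \<Rightarrow> 'a::ab_group_add)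
   \<Rightarrow> ('o list \<Rightarrow> int list \<Rightarrow> 'a list \<Rightarrow> 'a) \<Rightarrow> ('o list \<Rightarrow> int list \<Rightarrow> 'a list \<Rightarrow> 'a)
   \<Rightarrow> 'o list \<Rightarrow> int list \<Rightarrow> 'a list \<Rightarrow> 'a" where
  "B2 b r p Xs ds xs =
     (let m = length ds in
      \<Sum>a\<le>m. \<Sum>j\<le>m - a. \<Sum>c\<le>m - a - j. \<Sum>t\<le>m - a - j - c. ins2_at b r p a j c t Xs ds xs)"

definition ainf_cat :: "('k::comm_ring_1 \<Rightarrow> 'a::ab_group_add \<Rightarrow> 'a)
   \<Rightarrow> ('o \<Rightarrow> 'o \<Rightarrow> int \<Rightarrow> 'a set) \<Rightarrow> ('o list \<Rightarrow> int list \<Rightarrow> 'a list \<Rightarrow> 'a) \<Rightarrow> bool" where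
  "ainf_cat sc H b \<longleftrightarrow> module sc \<and> (\<forall>X Y n. module.subspace sc (H X Y n)) \<and>
     (\<forall>m\<ge>1. mlmap sc sc H H id m 1 b) \<and>
     (\<forall>Xs ds xs. args_ok H Xs ds xs \<and> length ds \<ge> 1 \<longrightarrow>
        (\<Sum>r\<le>length ds. \<Sum>n\<in>{1..length ds - r}. ins_at b b 1 r n Xs ds xs) = 0)"

definition compositions :: "nat \<Rightarrow> nat list set" where
  "compositions m = {is. (\<forall>i\<in>set is. 0 < i) \<and> sum_list is = m}"

fun oblocks :: "nat list \<Rightarrow> 'o list \<Rightarrow> 'o list" where
  "oblocks [] Xs = [hd Xs]"
| "oblocks (i # is) Xs = hd Xs # oblocks is (drop i Xs)"

fun dblocks :: "nat list \<Rightarrow> int list \<Rightarrow> int list" where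
  "dblocks [] ds = []"
| "dblocks (i # is) ds = sum_list (take i ds) # dblocks is (drop i ds)"

fun fblocks :: "('o list \<Rightarrow> int list \<Rightarrow> 'a list \<Rightarrow> 'b) \<Rightarrow> nat list \<Rightarrow> 'o list \<Rightarrow> int list \<Rightarrow> 'a list \<Rightarrow> 'b list" where
  "fblocks f [] Xs ds xs = []"
| "fblocks f (i # is) Xs ds xs =
     f (take (Suc i) Xs) (take i ds) (take i xs) # fblocks f is (drop i Xs) (drop i ds) (drop i xs)"

definition ainf_functor :: "('k::comm_ring_1 \<Rightarrow> 'a::ab_group_add \<Rightarrow> 'a)
   \<Rightarrow> ('o \<Rightarrow> 'o \<Rightarrow> int \<Rightarrow> 'a set) \<Rightarrow> ('o list \<Rightarrow> int list \<Rightarrow> 'a list \<Rightarrow> 'a)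
   \<Rightarrow> ('k \<Rightarrow> 'b::ab_group_add \<Rightarrow> 'b)
   \<Rightarrow> ('p \<Rightarrow> 'p \<Rightarrow> int \<Rightarrow> 'b set) \<Rightarrow> ('p list \<Rightarrow> int list \<Rightarrow> 'b list \<Rightarrow> 'b)
   \<Rightarrow> ('o \<Rightarrow> 'p) \<Rightarrow> ('o list \<Rightarrow> int list \<Rightarrow> 'a list \<Rightarrow> 'b) \<Rightarrow> bool" where
  "ainf_functor scA HA bA scB HB bB fo f \<longleftrightarrow>
     (\<forall>m\<ge>1. mlmap scA scB HA HB fo m 0 f) \<and>
     (\<forall>Xs ds xs. args_ok HA Xs ds xs \<and> length ds \<ge> 1 \<longrightarrow>
        (\<Sum>is\<in>compositions (length ds).
            bB (map fo (oblocks is Xs)) (dblocks is ds) (fblocks f is Xs ds xs))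
        = (\<Sum>r\<le>length ds. \<Sum>n\<in>{1..length ds - r}. ins_at f bA 1 r n Xs ds xs))"

definition glin :: "('k::comm_ring_1 \<Rightarrow> 'a::ab_group_add \<Rightarrow> 'a) \<Rightarrow> ('k \<Rightarrow> 'b::ab_group_add \<Rightarrow> 'b)
   \<Rightarrow> (int \<Rightarrow> 'a set) \<Rightarrow> (int \<Rightarrow> 'b set) \<Rightarrow> int \<Rightarrow> (int \<Rightarrow> 'a \<Rightarrow> 'b) \<Rightarrow> bool" where
  "glin sc sc' C C' e phi \<longleftrightarrow>
     (\<forall>n. \<forall>x\<in>C n. phi n x \<in> C' (n + e)) \<and>
     (\<forall>n. \<forall>x\<in>C n. \<forall>y\<in>C n. phi n (x + y) = phi n x + phi n y) \<and>
     (\<forall>n c. \<forall>x\<in>C n. phi n (sc c x) = sc' c (phi n x))"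

definition chain_map :: "('k::comm_ring_1 \<Rightarrow> 'a::ab_group_add \<Rightarrow> 'a) \<Rightarrow> ('k \<Rightarrow> 'b::ab_group_add \<Rightarrow> 'b)
   \<Rightarrow> (int \<Rightarrow> 'a set) \<Rightarrow> (int \<Rightarrow> 'a \<Rightarrow> 'a) \<Rightarrow> (int \<Rightarrow> 'b set) \<Rightarrow> (int \<Rightarrow> 'b \<Rightarrow> 'b)
   \<Rightarrow> (int \<Rightarrow> 'a \<Rightarrow> 'b) \<Rightarrow> bool" where
  "chain_map sc sc' C d C' d' phi \<longleftrightarrow> glin sc sc' C C' 0 phi \<and>
     (\<forall>n. \<forall>x\<in>C n. d' n (phi n x) = phi (n + 1) (d n x))"

definition homotopic :: "('k::comm_ring_1 \<Rightarrow> 'a::ab_group_add \<Rightarrow> 'a) \<Rightarrow> ('k \<Rightarrow> 'b::ab_group_add \<Rightarrow> 'b)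
   \<Rightarrow> (int \<Rightarrow> 'a set) \<Rightarrow> (int \<Rightarrow> 'a \<Rightarrow> 'a) \<Rightarrow> (int \<Rightarrow> 'b set) \<Rightarrow> (int \<Rightarrow> 'b \<Rightarrow> 'b)
   \<Rightarrow> (int \<Rightarrow> 'a \<Rightarrow> 'b) \<Rightarrow> (int \<Rightarrow> 'a \<Rightarrow> 'b) \<Rightarrow> bool" where
  "homotopic sc sc' C d C' d' phi psi \<longleftrightarrow>
     (\<exists>h. glin sc sc' C C' (-1) h \<and>
        (\<forall>n. \<forall>x\<in>C n. phi n x - psi n x = h (n + 1) (d n x) + d' (n - 1) (h n x)))"

definition homotopy_invertible :: "('k::comm_ring_1 \<Rightarrow> 'a::ab_group_add \<Rightarrow> 'a)
   \<Rightarrow> (int \<Rightarrow> 'a set) \<Rightarrow> (int \<Rightarrow> 'a \<Rightarrow> 'a) \<Rightarrow> (int \<Rightarrow> 'a \<Rightarrow> 'a) \<Rightarrow> bool" where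
  "homotopy_invertible sc C d phi \<longleftrightarrow> chain_map sc sc C d C d phi \<and>
     (\<exists>psi. chain_map sc sc C d C d psi \<and>
        homotopic sc sc C d C d (\<lambda>n x. psi n (phi n x)) (\<lambda>n x. x) \<and>
        homotopic sc sc C d C d (\<lambda>n x. phi n (psi n x)) (\<lambda>n x. x))"

text \<open>Unit transformation i : id -> id of the A-infinity category (sc,H,b).
 For the identity functor (id_1 = 1, id_n = 0 for n >= 2) the naturality equation
 and [v,b] unfold to the sums below.\<close>
definition unit_transf :: "('k::comm_ring_1 \<Rightarrow> 'a::ab_group_add \<Rightarrow> 'a)
   \<Rightarrow> ('o \<Rightarrow> 'o \<Rightarrow> int \<Rightarrow> 'a set) \<Rightarrow> ('o list \<Rightarrow> int list \<Rightarrow> 'a list \<Rightarrow> 'a)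
   \<Rightarrow> ('o list \<Rightarrow> int list \<Rightarrow> 'a list \<Rightarrow> 'a) \<Rightarrow> bool" where
  "unit_transf sc H b i \<longleftrightarrow>
     (\<forall>m. mlmap sc sc H H id m (-1) i) \<and>
     (\<forall>Xs ds xs. args_ok H Xs ds xs \<longrightarrow>
        (\<Sum>q\<le>length ds. \<Sum>k\<le>length ds - q. ins_at b i (-1) q k Xs ds xs)
        + (\<Sum>q\<le>length ds. \<Sum>n\<in>{1..length ds - q}. ins_at i b 1 q n Xs ds xs) = 0) \<and>
     (\<exists>v. (\<forall>m. mlmap sc sc H H id m (-2) v) \<and>
        (\<forall>Xs ds xs. args_ok H Xs ds xs \<longrightarrow>
           B2 b i i Xs ds xs - i Xs ds xs =
             (\<Sum>q\<le>length ds. \<Sum>k\<le>length ds - q. ins_at b v (-2) q k Xs ds xs)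
             - (\<Sum>q\<le>length ds. \<Sum>n\<in>{1..length ds - q}. ins_at v b 1 q n Xs ds xs))) \<and>
     (\<forall>X Y. homotopy_invertible sc (H X Y) (\<lambda>n x. b [X, Y] [n] [x])
               (\<lambda>n x. ins_at b i (-1) 1 0 [X, Y] [n] [x]) \<and>
            homotopy_invertible sc (H X Y) (\<lambda>n x. b [X, Y] [n] [x])
               (\<lambda>n x. ins_at b i (-1) 0 0 [X, Y] [n] [x]))"

end

theory Submission
  imports Defs
begin

text \<open>The implications (C6) \<Longrightarrow> (C7) \<Longrightarrow> (C8) hold for every null-homotopic chain map, and
 (C8) \<Longrightarrow> (C9) because the unit element u = i_0 of an object is a b_1-cycle of degree -1.
 For (C9) \<Longrightarrow> (C6) write u f_1 = w b_1. Unitality makes right multiplication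
 x \<mapsto> (x \<otimes> u) b_2 homotopy invertible, and its composite with f_1 is null-homotopic:
 the A-infinity functor equation on x \<otimes> u and the A-infinity relation of B on x f_1 \<otimes> w
 show that K = (1 \<otimes> u) f_2 - (f_1 \<otimes> w) b_2 is a null-homotopy. Finally, a chain map that
 becomes null-homotopic after precomposition with a homotopy equivalence is null-homotopic.\<close>

lemma args_ok_Nil: "args_ok H [X] [] []"
  by (simp add: args_ok_def)

lemma args_ok_unary [simp]: "args_ok H [X, Y] [n] [x] \<longleftrightarrow> x \<in> H X Y n"
  by (simp add: args_ok_def)

lemma args_ok_binary [simp]:
  "args_ok H [X, Y, Z] [n, m] [x, z] \<longleftrightarrow> x \<in> H X Y n \<and> z \<in> H Y Z m"
  by (auto simp: args_ok_def less_Suc_eq nth_Cons')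

lemma ksign_0 [simp]: "ksign 0 x = x"
  by (simp add: ksign_def)

lemma glin_mem: "glin sc sc' C C' e phi \<Longrightarrow> x \<in> C n \<Longrightarrow> phi n x \<in> C' (n + e)"
  by (simp add: glin_def)

lemma glin_add:
  "glin sc sc' C C' e phi \<Longrightarrow> x \<in> C n \<Longrightarrow> y \<in> C n \<Longrightarrow> phi n (x + y) = phi n x + phi n y"
  by (simp add: glin_def)

lemma glin_zero: "glin sc sc' C C' e phi \<Longrightarrow> 0 \<in> C n \<Longrightarrow> phi n 0 = 0"
  using glin_add[of sc sc' C C' e phi 0 n 0] by simp

lemma glin_diff:
  assumes "glin sc sc' C C' e phi" "module sc" "module.subspace sc (C n)" "x \<in> C n" "y \<in> C n"
  shows "phi n (x - y) = phi n x - phi n y"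
proof -
  have "x - y \<in> C n"
    using assms(2-5) by (rule module.subspace_diff)
  then have "phi n (x - y + y) = phi n (x - y) + phi n y"
    by (rule glin_add[OF assms(1) _ assms(5)])
  then show ?thesis
    by (simp add: algebra_simps)
qed

lemma glin_compose:
  "glin sc sc' C C' e phi \<Longrightarrow> glin sc' sc'' C' C'' e' psi \<Longrightarrow>
    glin sc sc'' C C'' (e + e') (\<lambda>n x. psi (n + e) (phi n x))"
  unfolding glin_def by (metis add.assoc)

lemma glin_minus:
  assumes "module sc'" "\<And>n. module.subspace sc' (C' n)"
    and "glin sc sc' C C' e phi" "glin sc sc' C C' e psi"
  shows "glin sc sc' C C' e (\<lambda>n x. phi n x - psi n x)"
  using assms module.subspace_diff[OF assms(1,2)]
  by (simp add: glin_def module.scale_right_diff_distrib)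

lemma homotopic_zero_iff:
  "homotopic sc sc' C d C' d' F (\<lambda>n x. 0) \<longleftrightarrow>
    (\<exists>h. glin sc sc' C C' (-1) h \<and> (\<forall>n. \<forall>x\<in>C n. F n x = h (n + 1) (d n x) + d' (n - 1) (h n x)))"
  by (simp add: homotopic_def)

lemma homotopic_zero_cycle_is_boundary:
  assumes "homotopic sc sc' C d C' d' F (\<lambda>n x. 0)" "0 \<in> C (n + 1)" "x \<in> C n" "d n x = 0"
  shows "\<exists>y\<in>C' (n - 1). d' (n - 1) y = F n x"
proof -
  obtain h where h: "glin sc sc' C C' (-1) h"
    and Fh: "\<forall>n. \<forall>x\<in>C n. F n x = h (n + 1) (d n x) + d' (n - 1) (h n x)"
    using assms(1) by (auto simp: homotopic_zero_iff)
  have "F n x = d' (n - 1) (h n x)"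
    using Fh assms(3,4) glin_zero[OF h assms(2)] by simp
  moreover have "h n x \<in> C' (n - 1)"
    using glin_mem[OF h assms(3)] by simp
  ultimately show ?thesis
    by auto
qed

lemma null_homotopic_of_precomp_homotopy_invertible:
  assumes modC: "module sc" "\<And>n. module.subspace sc (C n)"
    and modC': "module sc'" "\<And>n. module.subspace sc' (C' n)"
    and d: "glin sc sc C C 1 d" and d': "glin sc' sc' C' C' 1 d'"
    and F: "chain_map sc sc' C d C' d' F"
    and phi: "homotopy_invertible sc C d phi"
    and null: "homotopic sc sc' C d C' d' (\<lambda>n x. F n (phi n x)) (\<lambda>n x. 0)"
  shows "homotopic sc sc' C d C' d' F (\<lambda>n x. 0)"
proof -
  obtain psi H where psi: "chain_map sc sc C d C d psi" and H: "glin sc sc C C (-1) H"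
    and psiH: "\<forall>n. \<forall>x\<in>C n. phi n (psi n x) - x = H (n + 1) (d n x) + d (n - 1) (H n x)"
    using phi unfolding homotopy_invertible_def homotopic_def by blast
  obtain K where K: "glin sc sc' C C' (-1) K"
    and FK: "\<forall>n. \<forall>x\<in>C n. F n (phi n x) = K (n + 1) (d n x) + d' (n - 1) (K n x)"
    using null by (auto simp: homotopic_zero_iff)
  have F_glin: "glin sc sc' C C' 0 F" and psi_glin: "glin sc sc C C 0 psi"
    using F psi by (simp_all add: chain_map_def)
  \<comment> \<open>From phi psi - 1 = [H, d] and F phi = [K, d] one gets F = [psi K - H F, d].\<close>
  define h where "h n x = K n (psi n x) - F (n - 1) (H n x)" for n x
  have "glin sc sc' C C' (-1) (\<lambda>n x. K n (psi n x))"
    using glin_compose[OF psi_glin K] by simp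
  moreover have "glin sc sc' C C' (-1) (\<lambda>n x. F (n - 1) (H n x))"
    using glin_compose[OF H F_glin] by simp
  ultimately have "glin sc sc' C C' (-1) h"
    unfolding h_def by (rule glin_minus[OF modC'])
  moreover have "F n x = h (n + 1) (d n x) + d' (n - 1) (h n x)" if x: "x \<in> C n" for n x
  proof -
    have psix: "psi n x \<in> C n" and Hx: "H n x \<in> C (n - 1)" and Hdx: "H (n + 1) (d n x) \<in> C n"
      using glin_mem[OF psi_glin x] glin_mem[OF H x] glin_mem[OF H glin_mem[OF d x]] by simp_all
    have dHx: "d (n - 1) (H n x) \<in> C n"
      using glin_mem[OF d Hx] by simp
    have "phi n (psi n x) = H (n + 1) (d n x) + d (n - 1) (H n x) + x"
      using psiH x by (metis diff_add_cancel)
    then have "F n (phi n (psi n x)) = F n (H (n + 1) (d n x)) + F n (d (n - 1) (H n x)) + F n x"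
      using glin_add[OF F_glin] module.subspace_add[OF modC Hdx dHx] Hdx dHx x by simp
    then have "F n x = F n (phi n (psi n x)) - F n (H (n + 1) (d n x)) - F n (d (n - 1) (H n x))"
      by (simp add: algebra_simps)
    also have "F n (phi n (psi n x)) = K (n + 1) (d n (psi n x)) + d' (n - 1) (K n (psi n x))"
      using FK psix by blast
    also have "d n (psi n x) = psi (n + 1) (d n x)"
      using psi x by (simp add: chain_map_def)
    also have "d' (n - 1) (K n (psi n x)) = d' (n - 1) (h n x) + d' (n - 1) (F (n - 1) (H n x))"
      using glin_diff[OF d' modC'] glin_mem[OF K psix] glin_mem[OF F_glin Hx] by (simp add: h_def)
    also have "d' (n - 1) (F (n - 1) (H n x)) = F n (d (n - 1) (H n x))"
      using F Hx by (simp add: chain_map_def)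
    finally show ?thesis
      by (simp add: h_def)
  qed
  ultimately show ?thesis
    by (auto simp: homotopic_zero_iff)
qed

lemma mlmap_mem:
  "mlmap sc sc' H H' ob m e phi \<Longrightarrow> args_ok H Xs ds xs \<Longrightarrow> length ds = m \<Longrightarrow>
    phi Xs ds xs \<in> H' (ob (hd Xs)) (ob (last Xs)) (sum_list ds + e)"
  unfolding mlmap_def by blast

lemma mlmap_add:
  "mlmap sc sc' H H' ob m e phi \<Longrightarrow> args_ok H Xs ds xs \<Longrightarrow> length ds = m \<Longrightarrow> i < m \<Longrightarrow>
    x \<in> H (Xs ! i) (Xs ! Suc i) (ds ! i) \<Longrightarrow> y \<in> H (Xs ! i) (Xs ! Suc i) (ds ! i) \<Longrightarrow>
    phi Xs ds (xs[i := x + y]) = phi Xs ds (xs[i := x]) + phi Xs ds (xs[i := y])"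
  unfolding mlmap_def by blast

lemma mlmap_scale:
  "mlmap sc sc' H H' ob m e phi \<Longrightarrow> args_ok H Xs ds xs \<Longrightarrow> length ds = m \<Longrightarrow> i < m \<Longrightarrow>
    x \<in> H (Xs ! i) (Xs ! Suc i) (ds ! i) \<Longrightarrow> phi Xs ds (xs[i := sc c x]) = sc' c (phi Xs ds (xs[i := x]))"
  unfolding mlmap_def by blast

lemma mlmap_unary_glin:
  assumes "mlmap sc sc' H H' ob (Suc 0) e phi"
  shows "glin sc sc' (H X Y) (H' (ob X) (ob Y)) e (\<lambda>n x. phi [X, Y] [n] [x])"
  using mlmap_mem[OF assms, of "[X, Y]" "[n]" "[x]" for n x]
    mlmap_add[OF assms, of "[X, Y]" "[n]" "[x]" 0 for n x]
    mlmap_scale[OF assms, of "[X, Y]" "[n]" "[x]" 0 for n x]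
  by (simp add: glin_def)

lemma mlmap_binary_glin_left:
  assumes "mlmap sc sc' H H' ob 2 e phi" "z \<in> H Y Z m"
  shows "glin sc sc' (H X Y) (H' (ob X) (ob Z)) (m + e) (\<lambda>n x. phi [X, Y, Z] [n, m] [x, z])"
  using mlmap_mem[OF assms(1), of "[X, Y, Z]" "[n, m]" "[x, z]" for n x]
    mlmap_add[OF assms(1), of "[X, Y, Z]" "[n, m]" "[x, z]" 0 for n x]
    mlmap_scale[OF assms(1), of "[X, Y, Z]" "[n, m]" "[x, z]" 0 for n x] assms(2)
  by (simp add: glin_def add.assoc)

lemma mlmap_binary_zero_right:
  assumes "mlmap sc sc' H H' ob 2 e phi" "x \<in> H X Y n" "0 \<in> H Y Z m"
  shows "phi [X, Y, Z] [n, m] [x, 0] = 0"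
  using mlmap_add[OF assms(1), of "[X, Y, Z]" "[n, m]" "[x, 0]" 1 0 0] assms(2,3)
  by simp

lemma Nil_in_compositions_iff: "[] \<in> compositions m \<longleftrightarrow> m = 0"
  by (simp add: compositions_def)

lemma Cons_in_compositions_iff:
  "a # is \<in> compositions m \<longleftrightarrow> 0 < a \<and> a \<le> m \<and> is \<in> compositions (m - a)"
  by (auto simp: compositions_def)

lemma compositions_0: "compositions 0 = {[]}"
proof -
  have "is = []" if "is \<in> compositions 0" for "is"
    using that by (cases "is") (auto simp: Cons_in_compositions_iff)
  then show ?thesis
    by (auto simp: Nil_in_compositions_iff)
qed

lemma compositions_Suc_0: "compositions (Suc 0) = {[1]}"
proof -
  have "is = [1]" if "is \<in> compositions (Suc 0)" for "is"
    using that by (cases "is") (auto simp: Nil_in_compositions_iff Cons_in_compositions_iff compositions_0)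
  then show ?thesis
    by (auto simp: Cons_in_compositions_iff compositions_0)
qed

lemma compositions_2: "compositions 2 = {[2], [1, 1]}"
proof -
  have "is = [2] \<or> is = [1, 1]" if "is \<in> compositions 2" for "is"
    using that
    by (cases "is") (auto simp: Nil_in_compositions_iff Cons_in_compositions_iff le_Suc_eq numeral_2_eq_2
        compositions_0 compositions_Suc_0)
  then show ?thesis
    by (auto simp: Cons_in_compositions_iff compositions_0 compositions_Suc_0 numeral_2_eq_2)
qed

lemma ainf_cat_module: "ainf_cat sc H b \<Longrightarrow> module sc"
  by (simp add: ainf_cat_def)

lemma ainf_cat_subspace: "ainf_cat sc H b \<Longrightarrow> module.subspace sc (H X Y n)"
  by (simp add: ainf_cat_def)

lemma ainf_cat_zero_mem: "ainf_cat sc H b \<Longrightarrow> 0 \<in> H X Y n"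
  using ainf_cat_module ainf_cat_subspace module.subspace_0 by metis

lemma ainf_cat_b1_glin: "ainf_cat sc H b \<Longrightarrow> glin sc sc (H X Y) (H X Y) 1 (\<lambda>n x. b [X, Y] [n] [x])"
  using mlmap_unary_glin[of sc sc H H id 1 b] by (simp add: ainf_cat_def)

lemma ainf_cat_b2_glin_left:
  "ainf_cat sc H b \<Longrightarrow> z \<in> H Y Z m \<Longrightarrow>
    glin sc sc (H X Y) (H X Z) (m + 1) (\<lambda>n x. b [X, Y, Z] [n, m] [x, z])"
  using mlmap_binary_glin_left[of sc sc H H id 1 b] by (simp add: ainf_cat_def)

lemma ainf_cat_equation:
  "ainf_cat sc H b \<Longrightarrow> args_ok H Xs ds xs \<Longrightarrow> 1 \<le> length ds \<Longrightarrow>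
    (\<Sum>r\<le>length ds. \<Sum>n\<in>{1..length ds - r}. ins_at b b 1 r n Xs ds xs) = 0"
  by (simp add: ainf_cat_def)

lemma ainf_cat_equation_binary:
  assumes "ainf_cat sc H b" "x \<in> H X Y n" "z \<in> H Y Z m"
  shows "b [X, Y, Z] [n, m + 1] [x, b [Y, Z] [m] [z]] + ksign m (b [X, Y, Z] [n + 1, m] [b [X, Y] [n] [x], z])
    + b [X, Z] [n + m + 1] [b [X, Y, Z] [n, m] [x, z]] = 0"
  using ainf_cat_equation[OF assms(1), of "[X, Y, Z]" "[n, m]" "[x, z]"] assms(2,3)
  by (simp add: ins_at_def numeral_2_eq_2 atMost_Suc add.assoc)

lemma ainf_functor_f1_glin:
  "ainf_functor sA HA bA sB HB bB fo f \<Longrightarrow>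
    glin sA sB (HA X Y) (HB (fo X) (fo Y)) 0 (\<lambda>n x. f [X, Y] [n] [x])"
  using mlmap_unary_glin[of sA sB HA HB fo 0 f] by (simp add: ainf_functor_def)

lemma ainf_functor_f2_glin_left:
  "ainf_functor sA HA bA sB HB bB fo f \<Longrightarrow> z \<in> HA Y Z m \<Longrightarrow>
    glin sA sB (HA X Y) (HB (fo X) (fo Z)) m (\<lambda>n x. f [X, Y, Z] [n, m] [x, z])"
  using mlmap_binary_glin_left[of sA sB HA HB fo 0 f] by (simp add: ainf_functor_def)

lemma ainf_functor_f2_zero_right:
  "ainf_functor sA HA bA sB HB bB fo f \<Longrightarrow> x \<in> HA X Y n \<Longrightarrow> 0 \<in> HA Y Z m \<Longrightarrow>
    f [X, Y, Z] [n, m] [x, 0] = 0"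
  using mlmap_binary_zero_right[of sA sB HA HB fo 0 f] by (simp add: ainf_functor_def)

lemma ainf_functor_equation:
  "ainf_functor sA HA bA sB HB bB fo f \<Longrightarrow> args_ok HA Xs ds xs \<Longrightarrow> 1 \<le> length ds \<Longrightarrow>
    (\<Sum>is\<in>compositions (length ds). bB (map fo (oblocks is Xs)) (dblocks is ds) (fblocks f is Xs ds xs))
      = (\<Sum>r\<le>length ds. \<Sum>n\<in>{1..length ds - r}. ins_at f bA 1 r n Xs ds xs)"
  by (simp add: ainf_functor_def)

lemma ainf_functor_equation_unary:
  assumes "ainf_functor sA HA bA sB HB bB fo f" "x \<in> HA X Y n"
  shows "bB [fo X, fo Y] [n] [f [X, Y] [n] [x]] = f [X, Y] [n + 1] [bA [X, Y] [n] [x]]"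
  using ainf_functor_equation[OF assms(1), of "[X, Y]" "[n]" "[x]"] assms(2)
  by (simp add: ins_at_def compositions_Suc_0)

lemma ainf_functor_f1_chain_map:
  "ainf_functor sA HA bA sB HB bB fo f \<Longrightarrow>
    chain_map sA sB (HA X Y) (\<lambda>n x. bA [X, Y] [n] [x]) (HB (fo X) (fo Y)) (\<lambda>n y. bB [fo X, fo Y] [n] [y])
      (\<lambda>n x. f [X, Y] [n] [x])"
  by (simp add: chain_map_def ainf_functor_f1_glin ainf_functor_equation_unary)

lemma ainf_functor_equation_binary:
  assumes "ainf_functor sA HA bA sB HB bB fo f" "x \<in> HA X Y n" "z \<in> HA Y Z m"
  shows "bB [fo X, fo Z] [n + m] [f [X, Y, Z] [n, m] [x, z]]
      + bB [fo X, fo Y, fo Z] [n, m] [f [X, Y] [n] [x], f [Y, Z] [m] [z]]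
    = f [X, Y, Z] [n, m + 1] [x, bA [Y, Z] [m] [z]] + ksign m (f [X, Y, Z] [n + 1, m] [bA [X, Y] [n] [x], z])
      + f [X, Z] [n + m + 1] [bA [X, Y, Z] [n, m] [x, z]]"
  using ainf_functor_equation[OF assms(1), of "[X, Y, Z]" "[n, m]" "[x, z]"] assms(2,3)
  by (simp add: ins_at_def compositions_2[unfolded numeral_2_eq_2] numeral_2_eq_2 atMost_Suc add.assoc)

lemma unit_transf_unit_mem: "unit_transf sc H b i \<Longrightarrow> i [X] [] [] \<in> H X X (-1)"
  using mlmap_mem[of sc sc H H id 0 "-1" i "[X]" "[]" "[]"] by (simp add: unit_transf_def args_ok_Nil)

lemma unit_transf_naturality:
  "unit_transf sc H b i \<Longrightarrow> args_ok H Xs ds xs \<Longrightarrow>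
    (\<Sum>q\<le>length ds. \<Sum>k\<le>length ds - q. ins_at b i (-1) q k Xs ds xs)
      + (\<Sum>q\<le>length ds. \<Sum>n\<in>{1..length ds - q}. ins_at i b 1 q n Xs ds xs) = 0"
  unfolding unit_transf_def by blast

lemma unit_transf_unit_cycle: "unit_transf sc H b i \<Longrightarrow> b [X, X] [-1] [i [X] [] []] = 0"
  using unit_transf_naturality[of sc H b i "[X]" "[]" "[]"] by (simp add: args_ok_Nil ins_at_def)

lemma unit_transf_right_mult_homotopy_invertible:
  assumes "unit_transf sc H b i"
  shows "homotopy_invertible sc (H X Y) (\<lambda>n x. b [X, Y] [n] [x]) (\<lambda>n x. b [X, Y, Y] [n, -1] [x, i [Y] [] []])"
proof -
  have "homotopy_invertible sc (H X Y) (\<lambda>n x. b [X, Y] [n] [x]) (\<lambda>n x. ins_at b i (-1) 1 0 [X, Y] [n] [x])"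
    using assms unfolding unit_transf_def by blast
  moreover have "(\<lambda>n x. ins_at b i (-1) 1 0 [X, Y] [n] [x]) = (\<lambda>n x. b [X, Y, Y] [n, -1] [x, i [Y] [] []])"
    by (simp add: ins_at_def fun_eq_iff)
  ultimately show ?thesis
    by simp
qed

lemma ainf_functor_right_mult_null_homotopic:
  assumes A: "ainf_cat sA HA bA" and B: "ainf_cat sB HB bB"
    and F: "ainf_functor sA HA bA sB HB bB fo f"
    and u: "u \<in> HA Y Y (-1)" and u_cycle: "bA [Y, Y] [-1] [u] = 0"
    and w: "w \<in> HB (fo Y) (fo Y) (-2)" and fu: "f [Y, Y] [-1] [u] = bB [fo Y, fo Y] [-2] [w]"
  shows "homotopic sA sB (HA X Y) (\<lambda>n x. bA [X, Y] [n] [x]) (HB (fo X) (fo Y)) (\<lambda>n y. bB [fo X, fo Y] [n] [y])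
      (\<lambda>n x. f [X, Y] [n] [bA [X, Y, Y] [n, -1] [x, u]]) (\<lambda>n x. 0)"
proof -
  define K where
    "K n x = f [X, Y, Y] [n, -1] [x, u] - bB [fo X, fo Y, fo Y] [n, -2] [f [X, Y] [n] [x], w]" for n x
  have f1: "glin sA sB (HA X Y) (HB (fo X) (fo Y)) 0 (\<lambda>n x. f [X, Y] [n] [x])"
    using F by (rule ainf_functor_f1_glin)
  have f2u: "glin sA sB (HA X Y) (HB (fo X) (fo Y)) (-1) (\<lambda>n x. f [X, Y, Y] [n, -1] [x, u])"
    using ainf_functor_f2_glin_left[OF F u] .
  have b2w: "glin sA sB (HA X Y) (HB (fo X) (fo Y)) (-1) (\<lambda>n x. bB [fo X, fo Y, fo Y] [n, -2] [f [X, Y] [n] [x], w])"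
    using glin_compose[OF f1 ainf_cat_b2_glin_left[OF B w]] by simp
  have "glin sA sB (HA X Y) (HB (fo X) (fo Y)) (-1) K"
    unfolding K_def using ainf_cat_module[OF B] ainf_cat_subspace[OF B] f2u b2w by (rule glin_minus)
  moreover have "f [X, Y] [n] [bA [X, Y, Y] [n, -1] [x, u]]
      = K (n + 1) (bA [X, Y] [n] [x]) + bB [fo X, fo Y] [n - 1] [K n x]" if x: "x \<in> HA X Y n" for n x
  proof -
    have f1x: "f [X, Y] [n] [x] \<in> HB (fo X) (fo Y) n"
      using glin_mem[OF f1 x] by simp
    have functor_eq: "f [X, Y] [n] [bA [X, Y, Y] [n, -1] [x, u]]
      = f [X, Y, Y] [n + 1, -1] [bA [X, Y] [n] [x], u] + bB [fo X, fo Y] [n - 1] [f [X, Y, Y] [n, -1] [x, u]]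
        + bB [fo X, fo Y, fo Y] [n, -1] [f [X, Y] [n] [x], bB [fo Y, fo Y] [-2] [w]]"
      using ainf_functor_equation_binary[OF F x u] u_cycle fu ainf_functor_f2_zero_right[OF F x ainf_cat_zero_mem[OF A]]
      by (simp add: ksign_def algebra_simps)
    have cat_eq: "bB [fo X, fo Y, fo Y] [n, -1] [f [X, Y] [n] [x], bB [fo Y, fo Y] [-2] [w]]
      = - bB [fo X, fo Y] [n - 1] [bB [fo X, fo Y, fo Y] [n, -2] [f [X, Y] [n] [x], w]]
        - bB [fo X, fo Y, fo Y] [n + 1, -2] [f [X, Y] [n + 1] [bA [X, Y] [n] [x]], w]"
      using ainf_cat_equation_binary[OF B f1x w] ainf_functor_equation_unary[OF F x]
      by (simp add: ksign_def eq_neg_iff_add_eq_0 algebra_simps)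
    have dK: "bB [fo X, fo Y] [n - 1] [K n x] = bB [fo X, fo Y] [n - 1] [f [X, Y, Y] [n, -1] [x, u]]
        - bB [fo X, fo Y] [n - 1] [bB [fo X, fo Y, fo Y] [n, -2] [f [X, Y] [n] [x], w]]"
      unfolding K_def using glin_diff[OF ainf_cat_b1_glin[OF B] ainf_cat_module[OF B] ainf_cat_subspace[OF B]]
        glin_mem[OF f2u x] glin_mem[OF b2w x] by simp
    have Kd: "K (n + 1) (bA [X, Y] [n] [x]) = f [X, Y, Y] [n + 1, -1] [bA [X, Y] [n] [x], u]
        - bB [fo X, fo Y, fo Y] [n + 1, -2] [f [X, Y] [n + 1] [bA [X, Y] [n] [x]], w]"
      by (simp add: K_def)
    show ?thesis
      unfolding dK Kd functor_eq cat_eq by (simp add: algebra_simps)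
  qed
  ultimately show ?thesis
    by (auto simp: homotopic_zero_iff)
qed

lemma ainf_functor_f1_null_homotopic_if_unit_boundary:
  assumes A: "ainf_cat sA HA bA" and unit: "unit_transf sA HA bA iA"
    and B: "ainf_cat sB HB bB" and F: "ainf_functor sA HA bA sB HB bB fo f"
    and w: "w \<in> HB (fo Y) (fo Y) (-2)" "f [Y, Y] [-1] [iA [Y] [] []] = bB [fo Y, fo Y] [-2] [w]"
  shows "homotopic sA sB (HA X Y) (\<lambda>n x. bA [X, Y] [n] [x]) (HB (fo X) (fo Y))
    (\<lambda>n y. bB [fo X, fo Y] [n] [y]) (\<lambda>n x. f [X, Y] [n] [x]) (\<lambda>n x. 0)"
proof -
  have null: "homotopic sA sB (HA X Y) (\<lambda>n x. bA [X, Y] [n] [x]) (HB (fo X) (fo Y))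
      (\<lambda>n y. bB [fo X, fo Y] [n] [y]) (\<lambda>n x. f [X, Y] [n] [bA [X, Y, Y] [n, -1] [x, iA [Y] [] []]])
      (\<lambda>n x. 0)"
    using A B F unit_transf_unit_mem[OF unit] unit_transf_unit_cycle[OF unit] w
    by (rule ainf_functor_right_mult_null_homotopic)
  show ?thesis
    using ainf_cat_module[OF A] ainf_cat_subspace[OF A] ainf_cat_module[OF B] ainf_cat_subspace[OF B]
      ainf_cat_b1_glin[OF A] ainf_cat_b1_glin[OF B] ainf_functor_f1_chain_map[OF F]
      unit_transf_right_mult_homotopy_invertible[OF unit] null
    by (rule null_homotopic_of_precomp_homotopy_invertible)
qed

theorem proposition6p2:
  fixes sA :: "'k::comm_ring_1 \<Rightarrow> 'a::ab_group_add \<Rightarrow> 'a"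
    and HA :: "'o \<Rightarrow> 'o \<Rightarrow> int \<Rightarrow> 'a set"
    and bA :: "'o list \<Rightarrow> int list \<Rightarrow> 'a list \<Rightarrow> 'a"
    and iA :: "'o list \<Rightarrow> int list \<Rightarrow> 'a list \<Rightarrow> 'a"
    and sB :: "'k \<Rightarrow> 'b::ab_group_add \<Rightarrow> 'b"
    and HB :: "'p \<Rightarrow> 'p \<Rightarrow> int \<Rightarrow> 'b set"
    and bB :: "'p list \<Rightarrow> int list \<Rightarrow> 'b list \<Rightarrow> 'b"
    and fo :: "'o \<Rightarrow> 'p"
    and f :: "'o list \<Rightarrow> int list \<Rightarrow> 'a list \<Rightarrow> 'b"
  assumes A: "ainf_cat sA HA bA"
    and unit: "unit_transf sA HA bA iA"
    and B: "ainf_cat sB HB bB"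
    and F: "ainf_functor sA HA bA sB HB bB fo f"
  shows
    "((\<forall>X Y. homotopic sA sB (HA X Y) (\<lambda>n x. bA [X, Y] [n] [x])
              (HB (fo X) (fo Y)) (\<lambda>n y. bB [fo X, fo Y] [n] [y])
              (\<lambda>n x. f [X, Y] [n] [x]) (\<lambda>n x. 0))
      \<longleftrightarrow>
      (\<forall>X. homotopic sA sB (HA X X) (\<lambda>n x. bA [X, X] [n] [x])
              (HB (fo X) (fo X)) (\<lambda>n y. bB [fo X, fo X] [n] [y])
              (\<lambda>n x. f [X, X] [n] [x]) (\<lambda>n x. 0)))
     \<and>
     ((\<forall>X. homotopic sA sB (HA X X) (\<lambda>n x. bA [X, X] [n] [x])
              (HB (fo X) (fo X)) (\<lambda>n y. bB [fo X, fo X] [n] [y])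
              (\<lambda>n x. f [X, X] [n] [x]) (\<lambda>n x. 0))
      \<longleftrightarrow>
      (\<forall>X n x. x \<in> HA X X n \<and> bA [X, X] [n] [x] = 0 \<longrightarrow>
          (\<exists>y\<in>HB (fo X) (fo X) (n - 1). bB [fo X, fo X] [n - 1] [y] = f [X, X] [n] [x])))
     \<and>
     ((\<forall>X n x. x \<in> HA X X n \<and> bA [X, X] [n] [x] = 0 \<longrightarrow>
          (\<exists>y\<in>HB (fo X) (fo X) (n - 1). bB [fo X, fo X] [n - 1] [y] = f [X, X] [n] [x]))
      \<longleftrightarrow>
      (\<forall>X. \<exists>w\<in>HB (fo X) (fo X) (-2). f [X, X] [-1] [iA [X] [] []] = bB [fo X, fo X] [-2] [w]))"
    (is "(?C6 \<longleftrightarrow> ?C7) \<and> (_ \<longleftrightarrow> ?C8) \<and> (_ \<longleftrightarrow> ?C9)")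
proof -
  have "?C6 \<Longrightarrow> ?C7"
    by blast
  moreover have "?C7 \<Longrightarrow> ?C8"
  proof (intro allI impI)
    fix X n x
    assume C7: "?C7" and x: "x \<in> HA X X n \<and> bA [X, X] [n] [x] = 0"
    show "\<exists>y\<in>HB (fo X) (fo X) (n - 1). bB [fo X, fo X] [n - 1] [y] = f [X, X] [n] [x]"
      using homotopic_zero_cycle_is_boundary[OF C7[rule_format] ainf_cat_zero_mem[OF A]] x by simp
  qed
  moreover have "?C8 \<Longrightarrow> ?C9"
  proof (intro allI)
    fix X
    assume "?C8"
    then obtain y where "y \<in> HB (fo X) (fo X) (-1 - 1)" "bB [fo X, fo X] [-1 - 1] [y] = f [X, X] [-1] [iA [X] [] []]"
      using unit_transf_unit_mem[OF unit] unit_transf_unit_cycle[OF unit] by blast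
    then show "\<exists>w\<in>HB (fo X) (fo X) (-2). f [X, X] [-1] [iA [X] [] []] = bB [fo X, fo X] [-2] [w]"
      by (intro bexI[of _ y]) simp_all
  qed
  moreover have "?C9 \<Longrightarrow> ?C6"
  proof (intro allI)
    fix X Y
    assume "?C9"
    then obtain w where "w \<in> HB (fo Y) (fo Y) (-2)" "f [Y, Y] [-1] [iA [Y] [] []] = bB [fo Y, fo Y] [-2] [w]"
      by blast
    then show "homotopic sA sB (HA X Y) (\<lambda>n x. bA [X, Y] [n] [x]) (HB (fo X) (fo Y))
        (\<lambda>n y. bB [fo X, fo Y] [n] [y]) (\<lambda>n x. f [X, Y] [n] [x]) (\<lambda>n x. 0)"
      by (rule ainf_functor_f1_null_homotopic_if_unit_boundary[OF A unit B F])
  qed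
  ultimately show ?thesis
    by argo
qed

end
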